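(* In a combinatorial auction with single-dimensional signals $s_i\in\{0,1,\dots,k-1\}$ ($k\ge2$) and SOS valuations, fix a true signal profile $\mathbf{s}$ (reported truthfully) and a welfare-maximizing allocation $T^*=(T_i^* )_i$ at $\mathbf{s}$. Then the expected welfare $\mathbb{E}[\sum_i v_{i\bar T_i}(\mathbf{s})]$ of the Random Threshold mechanism is at least $\frac{1}{k-1}\mathsf{SELF}$, where $\mathsf{SELF}=\sum_{\ell=1}^{k-1}\sum_{i:s_i=\ell}v_{iT_i^*}(\mathbf{0}_{-i},s_i)$.
   Context: Setting: $n$ agents, $m$ items; agent $i$ has private signal $s_i$; her value for bundle $T\subseteq[m]$ is $v_{iT}(\mathbf{s})\ge0$, a public function of $\mathbf{s}=(s_1,\dots,s_n)$, weakly increasing in each coordinate and strictly increasing in $s_i$; each $v_{iT}$ is SOS. An allocation assigns disjoint bundles. SOS: for every coordinate $j$, $s_j$, $\delta\ge0$, and $\mathbf{s}'_{-j}\le\mathbf{s}_{-j}$ coordinate-wise, $v(\mathbf{s}'_{-j},s_j+\delta)-v(\mathbf{s}'_{-j},s_j)\ge v(\mathbf{s}_{-j},s_j+\delta)-v(\mathbf{s}_{-j},s_j)$. $(\mathbf{0}_{-i},s_i)$ is the profile with all signals except $i$'s set to $0$. Random Threshold (on reports $\mathbf{s}$): choose $\ell$ uniformly in $\{1,\dots,k-1\}$; $N_{\ge\ell}=\{i:s_i\ge\ell\}$, $N_{<\ell}=[n]\setminus N_{\ge\ell}$; for $i\in N_{\ge\ell}$ set $\bar v_{iT}=v_{iT}(\mathbf{s}_{N_{<\ell}},\boldsymbol{\ell}_{N_{\ge\ell}})$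 (signals of all agents in $N_{\ge\ell}$ replaced by $\ell$), for $i\in N_{<\ell}$ set $\bar v_{iT}=0$; choose $\bar T\in\arg\max\sum_{i\in N_{\ge\ell}}\bar v_{i\bar T_i}$ over allocations to agents of $N_{\ge\ell}$; an agent receiving $\bar T_i$ pays $v_{i\bar T_i}(\mathbf{s}_{-i},\ell-1)$. *)

theory Defs
  imports Complex_Main "HOL-Library.Disjoint_Sets"
begin

text \<open>Agents are 0..<n, items are 0..<m, signals are naturals in {0..<k}.
  A valuation system is v :: nat => nat set => (nat => nat) => real, v i T s = v_{iT}(s).\<close>

definition profile :: "nat \<Rightarrow> nat \<Rightarrow> (nat \<Rightarrow> nat) \<Rightarrow> bool" where
  "profile n k s \<longleftrightarrow> (\<forall>j<n. s j < k) \<and> (\<forall>j. n \<le> j \<longrightarrow> s j = 0)"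

definition val_ok :: "nat \<Rightarrow> nat \<Rightarrow> ((nat \<Rightarrow> nat) \<Rightarrow> real) \<Rightarrow> nat \<Rightarrow> bool" where
  "val_ok n k f i \<longleftrightarrow>
     (\<forall>s. profile n k s \<longrightarrow> 0 \<le> f s) \<and>
     (\<forall>s s'. profile n k s \<longrightarrow> profile n k s' \<longrightarrow> (\<forall>j<n. s j \<le> s' j) \<longrightarrow> f s \<le> f s') \<and>
     (\<forall>s x. profile n k s \<longrightarrow> s i < x \<longrightarrow> x < k \<longrightarrow> f s < f (s(i := x)))"

definition SOS :: "nat \<Rightarrow> nat \<Rightarrow> ((nat \<Rightarrow> nat) \<Rightarrow> real) \<Rightarrow> bool" where
  "SOS n k f \<longleftrightarrow>
     (\<forall>j<n. \<forall>s s' \<delta>. profile n k s \<longrightarrow> profile n k s' \<longrightarrow> s' j = s j \<longrightarrow>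
        (\<forall>j'<n. j' \<noteq> j \<longrightarrow> s' j' \<le> s j') \<longrightarrow> s j + \<delta> < k \<longrightarrow>
        f (s'(j := s j + \<delta>)) - f s' \<ge> f (s(j := s j + \<delta>)) - f s)"

definition alloc_to :: "nat \<Rightarrow> nat \<Rightarrow> nat set \<Rightarrow> (nat \<Rightarrow> nat set) \<Rightarrow> bool" where
  "alloc_to n m A T \<longleftrightarrow>
     (\<forall>i<n. T i \<subseteq> {0..<m}) \<and> disjoint_family_on T {0..<n} \<and>
     (\<forall>i<n. i \<notin> A \<longrightarrow> T i = {})"

abbreviation alloc :: "nat \<Rightarrow> nat \<Rightarrow> (nat \<Rightarrow> nat set) \<Rightarrow> bool" where
  "alloc n m T \<equiv> alloc_to n m {0..<n} T"

definition welfare :: "nat \<Rightarrow> (nat \<Rightarrow> nat set \<Rightarrow> (nat \<Rightarrow> nat) \<Rightarrow> real) \<Rightarrow> (nat \<Rightarrow> nat set) \<Rightarrow> (nat \<Rightarrow> nat) \<Rightarrow> real" where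
  "welfare n v T s = (\<Sum>i<n. v i (T i) s)"

definition above :: "nat \<Rightarrow> (nat \<Rightarrow> nat) \<Rightarrow> nat \<Rightarrow> nat set" where
  "above n s l = {i. i < n \<and> l \<le> s i}"

definition cap_profile :: "nat \<Rightarrow> (nat \<Rightarrow> nat) \<Rightarrow> nat \<Rightarrow> (nat \<Rightarrow> nat)" where
  "cap_profile n s l = (\<lambda>j. if j < n \<and> l \<le> s j then l else s j)"

definition vbar :: "nat \<Rightarrow> (nat \<Rightarrow> nat set \<Rightarrow> (nat \<Rightarrow> nat) \<Rightarrow> real) \<Rightarrow> (nat \<Rightarrow> nat) \<Rightarrow> nat \<Rightarrow> nat \<Rightarrow> nat set \<Rightarrow> real" where
  "vbar n v s l i T = (if i \<in> above n s l then v i T (cap_profile n s l) else 0)"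

text \<open>Tb is a valid outcome of Random Threshold at threshold l: an allocation to N_{>=l}
  maximising the sum of the surrogate values over such allocations (any tie-breaking).\<close>
definition RT_alloc :: "nat \<Rightarrow> nat \<Rightarrow> (nat \<Rightarrow> nat set \<Rightarrow> (nat \<Rightarrow> nat) \<Rightarrow> real) \<Rightarrow> (nat \<Rightarrow> nat) \<Rightarrow> nat \<Rightarrow> (nat \<Rightarrow> nat set) \<Rightarrow> bool" where
  "RT_alloc n m v s l Tb \<longleftrightarrow>
     alloc_to n m (above n s l) Tb \<and>
     (\<forall>T. alloc_to n m (above n s l) T \<longrightarrow>
        (\<Sum>i\<in>above n s l. vbar n v s l i (T i)) \<le> (\<Sum>i\<in>above n s l. vbar n v s l i (Tb i)))"

text \<open>Expected welfare at true profile s when l is uniform on {1..k-1} and Tb l is the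
  allocation chosen for threshold l.\<close>
definition RT_expected_welfare :: "nat \<Rightarrow> nat \<Rightarrow> (nat \<Rightarrow> nat set \<Rightarrow> (nat \<Rightarrow> nat) \<Rightarrow> real) \<Rightarrow> (nat \<Rightarrow> nat \<Rightarrow> nat set) \<Rightarrow> (nat \<Rightarrow> nat) \<Rightarrow> real" where
  "RT_expected_welfare n k v Tb s = (\<Sum>l\<in>{1..k-1}. welfare n v (Tb l) s) / real (k - 1)"

definition only_own :: "nat \<Rightarrow> (nat \<Rightarrow> nat) \<Rightarrow> (nat \<Rightarrow> nat)" where
  "only_own i s = (\<lambda>j. if j = i then s i else 0)"

definition SELF :: "nat \<Rightarrow> nat \<Rightarrow> (nat \<Rightarrow> nat set \<Rightarrow> (nat \<Rightarrow> nat) \<Rightarrow> real) \<Rightarrow> (nat \<Rightarrow> nat set) \<Rightarrow> (nat \<Rightarrow> nat) \<Rightarrow> real" where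
  "SELF n k v Tstar s = (\<Sum>l\<in>{1..k-1}. \<Sum>i\<in>{i. i < n \<and> s i = l}. v i (Tstar i) (only_own i s))"

end

theory Submission
  imports Defs
begin

text \<open>Fix a threshold l. An agent with signal l values its bundle T*_i at (0_{-i}, l) no
  more than at the capped profile, where all signals are truncated at l. Restricting T*
  to the agents with signal at least l is a candidate for Random Threshold, so its
  capped welfare is at most that of the chosen allocation, whose capped values in turn are at
  most its true values. Hence the welfare at threshold l dominates the l-th summand of SELF, and
  averaging over l gives the bound.\<close>

lemma val_ok_nonneg: "val_ok n k f i \<Longrightarrow> profile n k s \<Longrightarrow> 0 \<le> f s"
  unfolding val_ok_def by blast

lemma val_ok_mono:
  "val_ok n k f i \<Longrightarrow> profile n k s \<Longrightarrow> profile n k s' \<Longrightarrow> (\<And>j. j < n \<Longrightarrow> s j \<le> s' j)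
    \<Longrightarrow> f s \<le> f s'"
  unfolding val_ok_def by blast

lemma profile_cap_profile: "profile n k s \<Longrightarrow> profile n k (cap_profile n s l)"
  unfolding profile_def cap_profile_def by auto

lemma cap_profile_le: "cap_profile n s l j \<le> s j"
  unfolding cap_profile_def by auto

lemma profile_only_own: "profile n k s \<Longrightarrow> i < n \<Longrightarrow> profile n k (only_own i s)"
  unfolding profile_def only_own_def by auto

lemma only_own_le_cap_profile: "i < n \<Longrightarrow> only_own i s j \<le> cap_profile n s (s i) j"
  unfolding only_own_def cap_profile_def by auto

lemma finite_above: "finite (above n s l)"
  unfolding above_def by auto

lemma alloc_to_restrict:
  "alloc n m T \<Longrightarrow> alloc_to n m A (\<lambda>i. if i \<in> A then T i else {})"
  unfolding alloc_to_def disjoint_family_on_def by auto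

lemma sum_vbar_eq:
  "(\<Sum>i\<in>above n s l. vbar n v s l i (T i)) = (\<Sum>i\<in>above n s l. v i (T i) (cap_profile n s l))"
  by (rule sum.cong) (auto simp: vbar_def)

lemma sum_self_level_le_capped:
  assumes val: "\<And>i T. i < n \<Longrightarrow> T \<subseteq> {0..<m} \<Longrightarrow> val_ok n k (v i T) i"
    and s: "profile n k s"
    and Tstar: "alloc n m Tstar"
  shows "(\<Sum>i\<in>{i. i < n \<and> s i = l}. v i (Tstar i) (only_own i s))
    \<le> (\<Sum>i\<in>above n s l. v i (Tstar i) (cap_profile n s l))"
proof -
  have T_items: "Tstar i \<subseteq> {0..<m}" if "i < n" for i
    using Tstar that unfolding alloc_to_def by blast
  have "(\<Sum>i\<in>{i. i < n \<and> s i = l}. v i (Tstar i) (only_own i s))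
      \<le> (\<Sum>i\<in>{i. i < n \<and> s i = l}. v i (Tstar i) (cap_profile n s l))"
  proof (rule sum_mono)
    fix i assume "i \<in> {i. i < n \<and> s i = l}"
    then have i: "i < n" and l: "l = s i" by auto
    show "v i (Tstar i) (only_own i s) \<le> v i (Tstar i) (cap_profile n s l)"
      unfolding l using val_ok_mono[OF val[OF i T_items[OF i]]] i s
      by (simp add: profile_only_own profile_cap_profile only_own_le_cap_profile)
  qed
  also have "\<dots> \<le> (\<Sum>i\<in>above n s l. v i (Tstar i) (cap_profile n s l))"
    by (rule sum_mono2[OF finite_above])
      (auto simp: above_def intro!: val_ok_nonneg[OF val] T_items profile_cap_profile s)
  finally show ?thesis .
qed

lemma sum_capped_le_welfare:
  assumes val: "\<And>i T. i < n \<Longrightarrow> T \<subseteq> {0..<m} \<Longrightarrow> val_ok n k (v i T) i"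
    and s: "profile n k s"
    and T: "alloc_to n m A T"
    and A: "A \<subseteq> {0..<n}"
  shows "(\<Sum>i\<in>A. v i (T i) (cap_profile n s l)) \<le> welfare n v T s"
proof -
  have T_items: "T i \<subseteq> {0..<m}" if "i < n" for i
    using T that unfolding alloc_to_def by blast
  have "(\<Sum>i\<in>A. v i (T i) (cap_profile n s l)) \<le> (\<Sum>i\<in>A. v i (T i) s)"
    using A by (intro sum_mono val_ok_mono[OF val] T_items profile_cap_profile s cap_profile_le)
      auto
  also have "\<dots> \<le> (\<Sum>i<n. v i (T i) s)"
    using A by (intro sum_mono2) (auto intro!: val_ok_nonneg[OF val] T_items s)
  finally show ?thesis unfolding welfare_def .
qed

lemma RT_alloc_welfare_ge_self_level:
  assumes val: "\<And>i T. i < n \<Longrightarrow> T \<subseteq> {0..<m} \<Longrightarrow> val_ok n k (v i T) i"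
    and s: "profile n k s"
    and Tstar: "alloc n m Tstar"
    and RT: "RT_alloc n m v s l Tb"
  shows "(\<Sum>i\<in>{i. i < n \<and> s i = l}. v i (Tstar i) (only_own i s)) \<le> welfare n v Tb s"
proof -
  let ?A = "above n s l"
  have "(\<Sum>i\<in>{i. i < n \<and> s i = l}. v i (Tstar i) (only_own i s))
      \<le> (\<Sum>i\<in>?A. v i (Tstar i) (cap_profile n s l))"
    by (rule sum_self_level_le_capped[OF val s Tstar])
  also have "\<dots> = (\<Sum>i\<in>?A. vbar n v s l i (if i \<in> ?A then Tstar i else {}))"
    unfolding sum_vbar_eq by (rule sum.cong) auto
  also have "\<dots> \<le> (\<Sum>i\<in>?A. vbar n v s l i (Tb i))"
    using RT alloc_to_restrict[OF Tstar] unfolding RT_alloc_def by blast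
  also have "\<dots> \<le> welfare n v Tb s"
    unfolding sum_vbar_eq using RT
    by (intro sum_capped_le_welfare[OF val s]) (auto simp: RT_alloc_def above_def)
  finally show ?thesis .
qed

theorem mainTheorem6:
  fixes n m k :: nat
    and v :: "nat \<Rightarrow> nat set \<Rightarrow> (nat \<Rightarrow> nat) \<Rightarrow> real"
    and s :: "nat \<Rightarrow> nat"
    and Tstar :: "nat \<Rightarrow> nat set"
    and Tb :: "nat \<Rightarrow> nat \<Rightarrow> nat set"
  assumes "2 \<le> k"
    and "\<And>i T. i < n \<Longrightarrow> T \<subseteq> {0..<m} \<Longrightarrow> val_ok n k (v i T) i"
    and "\<And>i T. i < n \<Longrightarrow> T \<subseteq> {0..<m} \<Longrightarrow> SOS n k (v i T)"
    and "profile n k s"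
    and "alloc n m Tstar"
    and "\<And>T. alloc n m T \<Longrightarrow> welfare n v T s \<le> welfare n v Tstar s"
    and "\<And>l. l \<in> {1..k-1} \<Longrightarrow> RT_alloc n m v s l (Tb l)"
  shows "RT_expected_welfare n k v Tb s \<ge> SELF n k v Tstar s / real (k - 1)"
proof -
  have "SELF n k v Tstar s \<le> (\<Sum>l\<in>{1..k-1}. welfare n v (Tb l) s)"
    unfolding SELF_def
    by (intro sum_mono RT_alloc_welfare_ge_self_level[OF assms(2,4,5)] assms(7))
  then show ?thesis
    unfolding RT_expected_welfare_def by (simp add: divide_right_mono)
qed

end
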